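(* Let $p$ be the POP of length 4 defined by the relations $1>3$, $1>2$ and $4>2$; equivalently, avoiding $p$ means simultaneously avoiding the patterns $4132, 4213, 3214, 4123, 3124$. Let $a(n)=|S_n(p)|$. Then $a(0)=a(1)=1$, $a(2)=2$, and for $n\geq 3$, $$a(n)=4a(n-1)-3a(n-2)+a(n-3);$$ consequently, for $n\geq 1$, $a(n)=\sum_{i=0}^{n-1}\binom{n+2i-1}{3i}$. Moreover, $$\sum_{n\geq 0}a(n)x^n=\frac{1-3x+x^2}{1-4x+3x^2-x^3}.$$
   Context: An $n$-permutation is a word $\pi=\pi_1\cdots\pi_n$ containing each of $1,\ldots,n$ exactly once; $S_n$ is the set of $n$-permutations ($S_0$ consists of the empty permutation). A partially ordered pattern (POP) $p$ of length $k$ is a partial order on the label set $\{1,\ldots,k\}$; it is described by a set of generating relations, where a relation $x>y$ means that in an occurrence the entry in the $x$-th chosen position must be larger than the entry in the $y$-th chosen position, and labels not involved in any relation are unconstrained. An $n$-permutation $\pi$ contains $p$ if there are indices $1\leq i_1<\cdots<i_k\leq n$ such that $\pi_{i_x}>\pi_{i_y}$ whenever $x>y$ in the partial order; otherwise $\pi$ avoids $p$. $S_n(p)$ denotes the set of $n$-permutations avoiding $p$. A permutation $\pi$ avoids a classical pattern $q$ if it has no subsequence order-isomorphic to $q$. *)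

theory Defs
  imports Main "HOL-Computational_Algebra.Formal_Power_Series"
begin

text \<open>n-permutations as lists (1-indexed entries: pi_j = pi ! (j-1)).\<close>
definition perms :: "nat \<Rightarrow> nat list set" where
  "perms n = {xs. distinct xs \<and> set xs = {1..n}}"

text \<open>A POP of length k is given by a set R of generating relations (x,y),
  meaning label x > label y. pi contains the POP if there are positions
  i_1 < ... < i_k with pi_{i_x} > pi_{i_y} for every relation (x,y).\<close>
definition pop_contains :: "nat \<Rightarrow> (nat \<times> nat) set \<Rightarrow> nat list \<Rightarrow> bool" where
  "pop_contains k R \<pi> \<longleftrightarrow>
     (\<exists>i::nat \<Rightarrow> nat. strict_mono_on {1..k} i \<and>
        (\<forall>x\<in>{1..k}. 1 \<le> i x \<and> i x \<le> length \<pi>) \<and>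
        (\<forall>(x, y)\<in>R. \<pi> ! (i x - 1) > \<pi> ! (i y - 1)))"

definition pop_avoids :: "nat \<Rightarrow> (nat \<times> nat) set \<Rightarrow> nat list \<Rightarrow> bool" where
  "pop_avoids k R \<pi> \<longleftrightarrow> \<not> pop_contains k R \<pi>"

definition pat_contains :: "nat list \<Rightarrow> nat list \<Rightarrow> bool" where
  "pat_contains q \<pi> \<longleftrightarrow>
     (\<exists>i::nat \<Rightarrow> nat. strict_mono_on {1..length q} i \<and>
        (\<forall>x\<in>{1..length q}. 1 \<le> i x \<and> i x \<le> length \<pi>) \<and>
        (\<forall>x\<in>{1..length q}. \<forall>y\<in>{1..length q}.
            \<pi> ! (i x - 1) < \<pi> ! (i y - 1) \<longleftrightarrow> q ! (x - 1) < q ! (y - 1)))"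

definition pat_avoids :: "nat list \<Rightarrow> nat list \<Rightarrow> bool" where
  "pat_avoids q \<pi> \<longleftrightarrow> \<not> pat_contains q \<pi>"

definition popP :: "(nat \<times> nat) set" where
  "popP = {(1, 3), (1, 2), (4, 2)}"

definition aP :: "nat \<Rightarrow> nat" where
  "aP n = card {\<pi> \<in> perms n. pop_avoids 4 popP \<pi>}"

end

theory Submission
  imports Defs "HOL-Library.Sublist"
begin

text \<open>
  A permutation that avoids the pattern and is not increasing splits at its first descent
  \<open>M > z\<close> as \<open>R @ M # z # V @ W\<close>: the entries of \<open>V\<close> exceed \<open>M\<close> and again form an avoider,
  those of \<open>R\<close>, \<open>z\<close>, \<open>W\<close> lie below \<open>M\<close>, and in \<open>z # W\<close> no entry is smaller than an entry two
  or more places to its right. This gives \<open>a(n) = 1 + \<Sum>\<^sub>M h(M - 1) a(n - M)\<close>, where \<open>h(m)\<close>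
  counts the pairs \<open>(R, z # W)\<close> on \<open>{1..m}\<close>. Placing the largest entry of such a pair (last in
  \<open>R\<close>, or first or second in \<open>z # W\<close>) gives linear recurrences for \<open>h\<close>; solving the resulting
  linear system of generating functions yields the rational generating function, and the
  recurrence, the initial values and the binomial sum are read off from it.
\<close>

section \<open>Occurrences of the POP as subsequences\<close>

definition contains_P :: "nat list \<Rightarrow> bool" where
  "contains_P xs \<longleftrightarrow> (\<exists>a b c d. subseq [a, b, c, d] xs \<and> b < a \<and> c < a \<and> b < d)"

definition no_gapped_ascent :: "nat list \<Rightarrow> bool" where
  "no_gapped_ascent xs \<longleftrightarrow> \<not> (\<exists>b c d. subseq [b, c, d] xs \<and> b < d)"

lemma subseq_Cons_Cons_iff:
  "subseq (a # as) (x # xs) \<longleftrightarrow> a = x \<and> subseq as xs \<or> subseq (a # as) xs"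
  by (auto dest: subseq_Cons')

lemma set_mono_subseq: "subseq xs ys \<Longrightarrow> set xs \<subseteq> set ys"
  by (induction rule: list_emb.induct) auto

lemma subseq_append_right:
  assumes "subseq (y # ys) (U @ W)" and "y \<notin> set U"
  shows "subseq (y # ys) W"
  using assms(1)
proof (cases rule: subseq_appendE)
  case (append p q)
  have "p = []"
  proof (rule ccontr)
    assume "p \<noteq> []"
    then have "y \<in> set p" using append(1) by (cases p) auto
    then show False using assms(2) set_mono_subseq[OF append(2)] by blast
  qed
  then show ?thesis using append by simp
qed

lemma subseq_append_left:
  assumes "subseq (ys @ [y]) (U @ W)" and "y \<notin> set W"
  shows "subseq (ys @ [y]) U"
  using assms(1)
proof (cases rule: subseq_appendE)
  case (append p q)
  have "q = []"
  proof (rule ccontr)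
    assume "q \<noteq> []"
    then have "y \<in> set q" using append(1) by (cases q rule: rev_cases) auto
    then show False using assms(2) set_mono_subseq[OF append(3)] by blast
  qed
  then show ?thesis using append by simp
qed

lemma sorted_wrt_subseq: "subseq xs ys \<Longrightarrow> sorted_wrt P ys \<Longrightarrow> sorted_wrt P xs"
proof (induction rule: list_emb.induct)
  case (list_emb_Cons2 x y xs ys)
  then show ?case using set_mono_subseq[OF list_emb_Cons2(2)] by auto
qed auto

lemma contains_P_Cons:
  "contains_P (x # xs) \<longleftrightarrow>
     contains_P xs \<or> (\<exists>b c d. subseq [b, c, d] xs \<and> b < x \<and> c < x \<and> b < d)"
  unfolding contains_P_def subseq_Cons_Cons_iff by blast

lemma contains_P_subseq: "subseq xs ys \<Longrightarrow> contains_P xs \<Longrightarrow> contains_P ys"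
  unfolding contains_P_def by (meson subseq_order.trans)

lemma in_set_tlD: "x \<in> set (tl xs) \<Longrightarrow> x \<in> set xs"
  by (cases xs) auto

lemma ex_subseq_pair_iff: "(\<exists>c. subseq [c, d] Z) \<longleftrightarrow> d \<in> set (tl Z)"
proof (cases Z)
  case (Cons z Z')
  have "d \<in> set Z'" if "subseq [c, d] Z'" for c using set_mono_subseq[OF that] by simp
  then show ?thesis using Cons by (auto simp: subseq_Cons_Cons_iff subseq_singleton_left)
qed simp

lemma no_gapped_ascent_Nil: "no_gapped_ascent []"
  by (simp add: no_gapped_ascent_def)

lemma no_gapped_ascent_Cons:
  "no_gapped_ascent (x # Z) \<longleftrightarrow> no_gapped_ascent Z \<and> (\<forall>d\<in>set (tl Z). \<not> x < d)"
proof -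
  have "(\<exists>b c d. subseq [b, c, d] (x # Z) \<and> b < d) \<longleftrightarrow>
      (\<exists>d. (\<exists>c. subseq [c, d] Z) \<and> x < d) \<or> (\<exists>b c d. subseq [b, c, d] Z \<and> b < d)"
    unfolding subseq_Cons_Cons_iff by blast
  then show ?thesis unfolding no_gapped_ascent_def ex_subseq_pair_iff by blast
qed

lemma sorted_not_contains_P:
  assumes "sorted_wrt (<) xs" shows "\<not> contains_P xs"
proof
  assume "contains_P xs"
  then obtain a b c d where "subseq [a, b, c, d] xs" "b < a" unfolding contains_P_def by blast
  moreover from this(1) assms have "sorted_wrt (<) [a, b, c, d]" by (rule sorted_wrt_subseq)
  ultimately show False by simp
qed

lemma contains_P_sorted_prefix:
  "sorted_wrt (<) (R @ [M]) \<Longrightarrow> contains_P (R @ M # t) \<longleftrightarrow> contains_P (M # t)"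
proof (induction R)
  case (Cons r R)
  have IH: "contains_P (R @ M # t) \<longleftrightarrow> contains_P (M # t)"
    using Cons by simp
  have "contains_P (M # t)"
    if "subseq [b, c, d] (R @ M # t)" "b < r" "c < r" "b < d" for b c d
  proof -
    have above: "\<forall>v\<in>set (R @ [M]). r < v" using Cons.prems by simp
    have "subseq [b, c, d] ((R @ [M]) @ t)" using that(1) by simp
    moreover have "b \<notin> set (R @ [M])" using above that(2) by auto
    ultimately have "subseq [b, c, d] t" by (rule subseq_append_right)
    then have "subseq [M, b, c, d] (M # t)" by simp
    moreover have "b < M" "c < M" using above that(2,3) by auto
    ultimately show ?thesis unfolding contains_P_def using that(4) by blast
  qed
  then have "contains_P (r # R @ M # t) \<longleftrightarrow> contains_P (M # t)"
    unfolding contains_P_Cons[of r] IH by blast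
  then show ?case by simp
qed simp

lemma first_descent:
  fixes xs :: "'a::linorder list"
  assumes "distinct xs" and "\<not> sorted_wrt (<) xs"
  shows "\<exists>R M z t. xs = R @ M # z # t \<and> sorted_wrt (<) (R @ [M]) \<and> z < M"
  using assms
proof (induction xs)
  case (Cons x xs)
  then obtain y ys where xs: "xs = y # ys" by (cases xs) auto
  show ?case
  proof (cases "x < y")
    case True
    have "\<not> sorted_wrt (<) xs"
    proof
      assume "sorted_wrt (<) xs"
      then have "sorted_wrt (<) (x # xs)"
        using True xs by (auto intro: less_trans[OF True])
      then show False using Cons.prems by simp
    qed
    then obtain R M z t where
      dec: "xs = R @ M # z # t" "sorted_wrt (<) (R @ [M])" "z < M"
      using Cons by auto
    then have "hd (R @ [M]) = y" using xs by (cases R) auto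
    then have "sorted_wrt (<) (x # R @ [M])"
      using dec(2) True by (cases R) (auto intro: less_trans[OF True])
    then show ?thesis using dec by (intro exI[of _ "x # R"]) auto
  next
    case False
    then have "y < x" using Cons.prems xs by auto
    then show ?thesis using xs by (intro exI[of _ "[]"]) auto
  qed
qed simp

lemma first_descent_unique:
  fixes xs1 xs2 :: "'a::linorder list"
  shows "xs1 @ a # b # ys1 = xs2 @ c # d # ys2 \<Longrightarrow> sorted_wrt (<) (xs1 @ [a]) \<Longrightarrow> b < a
    \<Longrightarrow> sorted_wrt (<) (xs2 @ [c]) \<Longrightarrow> d < c \<Longrightarrow> xs1 = xs2 \<and> a = c \<and> b = d \<and> ys1 = ys2"
proof (induction xs1 arbitrary: xs2)
  case Nil
  show ?case
  proof (cases xs2)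
    case Nil then show ?thesis using Nil.prems by simp
  next
    case (Cons e xs2')
    then have "a = e" "b # ys1 = xs2' @ c # d # ys2" using Nil.prems by simp_all
    then have "a < b"
      using Nil.prems(4) Cons by (cases xs2') (auto simp: sorted_wrt_append)
    then show ?thesis using Nil.prems(3) less_asym by blast
  qed
next
  case (Cons e xs1')
  show ?case
  proof (cases xs2)
    case Nil
    then have "c = e" "d # ys2 = xs1' @ a # b # ys1" using Cons.prems by simp_all
    then have "c < d"
      using Cons.prems(2) by (cases xs1') (auto simp: sorted_wrt_append)
    then show ?thesis using Cons.prems(5) less_asym by blast
  next
    case (Cons f xs2')
    then have "e = f" "xs1' @ a # b # ys1 = xs2' @ c # d # ys2" using Cons.prems by simp_all
    moreover have "sorted_wrt (<) (xs1' @ [a])" "sorted_wrt (<) (xs2' @ [c])"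
      using Cons.prems \<open>xs2 = f # xs2'\<close> by simp_all
    ultimately show ?thesis using Cons.IH Cons.prems \<open>xs2 = f # xs2'\<close> by blast
  qed
qed

lemma dropWhile_below_if_not_contains_P:
  assumes dist: "distinct (x # y # t)" and "y < x" and avoid: "\<not> contains_P (x # y # t)"
  shows "\<forall>w\<in>set (dropWhile ((<) x) t). w < x"
proof
  let ?W = "dropWhile ((<) x) t"
  fix w assume w: "w \<in> set ?W"
  then obtain w1 W' where W: "?W = w1 # W'" by (cases ?W) auto
  have "w1 \<in> set t" using W by (metis list.set_intros(1) set_dropWhileD)
  then have "w1 \<noteq> x" using dist by auto
  moreover have "\<not> x < w1" using W by (metis hd_dropWhile list.distinct(1) list.sel(1))
  ultimately have w1: "w1 < x" by simp
  show "w < x"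
  proof (rule ccontr)
    assume "\<not> w < x"
    then have "w \<noteq> w1" and "y < w" using w1 \<open>y < x\<close> by auto
    then have "subseq [w1, w] ?W" using w W by (simp add: subseq_singleton_left)
    then have "subseq [w1, w] t" by (metis subseq_drop_many takeWhile_dropWhile_id)
    then have "subseq [x, y, w1, w] (x # y # t)" by simp
    then have "contains_P (x # y # t)"
      unfolding contains_P_def using w1 \<open>y < x\<close> \<open>y < w\<close> by blast
    then show False using avoid by simp
  qed
qed

lemma not_contains_P_after_descent:
  assumes "distinct (x # y # t)" and "y < x" and avoid: "\<not> contains_P (x # y # t)"
  shows "\<exists>U W. t = U @ W \<and> (\<forall>u\<in>set U. x < u) \<and> (\<forall>w\<in>set W. w < x)
           \<and> no_gapped_ascent (y # W) \<and> \<not> contains_P U"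
proof (intro exI conjI)
  let ?U = "takeWhile ((<) x) t" and ?W = "dropWhile ((<) x) t"
  show "t = ?U @ ?W" by simp
  show "\<forall>u\<in>set ?U. x < u" by (auto dest: set_takeWhileD)
  show below: "\<forall>w\<in>set ?W. w < x" using assms by (rule dropWhile_below_if_not_contains_P)
  have "subseq ?W t" using subseq_drop_many[OF subseq_order.refl, of ?W ?U] by simp
  then have sub: "subseq (x # y # ?W) (x # y # t)" by simp
  show "no_gapped_ascent (y # ?W)"
    unfolding no_gapped_ascent_def
  proof (intro notI, elim exE conjE)
    fix b c d assume bcd: "subseq [b, c, d] (y # ?W)" and "b < d"
    have "b < x" "c < x"
      using below \<open>y < x\<close> set_mono_subseq[OF bcd] by auto
    moreover have "subseq [x, b, c, d] (x # y # t)"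
      using bcd sub by (metis subseq_Cons2 subseq_order.trans)
    ultimately show False using avoid \<open>b < d\<close> unfolding contains_P_def by blast
  qed
  have "subseq ?U t" using subseq_rev_drop_many[OF subseq_order.refl, of ?U ?W] by simp
  then have "subseq ?U ([x, y] @ t)" by (rule subseq_drop_many)
  then show "\<not> contains_P ?U" using avoid contains_P_subseq by auto
qed

lemma not_contains_P_append:
  assumes above: "\<forall>u\<in>set U. x < u" and below: "\<forall>w\<in>set W. w < x"
    and "no_gapped_ascent W" and "\<not> contains_P U"
  shows "\<not> contains_P (U @ W)"
proof
  assume "contains_P (U @ W)"
  then obtain a b c d where abcd: "subseq [a, b, c, d] (U @ W)" "b < a" "c < a" "b < d"
    unfolding contains_P_def by blast
  show False
  proof (cases "b < x")
    case True
    from abcd(1) have "subseq [b, c, d] (U @ W)" by (rule subseq_Cons')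
    then have "subseq [b, c, d] W" by (rule subseq_append_right) (use above True in auto)
    then show False using assms(3) abcd(4) unfolding no_gapped_ascent_def by blast
  next
    case False
    from abcd(1) have "subseq ([a, b, c] @ [d]) (U @ W)" by simp
    moreover have "d \<notin> set W" using below False abcd(4) by (meson less_trans not_less)
    ultimately have "subseq ([a, b, c] @ [d]) U" by (rule subseq_append_left)
    then have "contains_P U" unfolding contains_P_def using abcd(2-4) by auto
    then show False using assms(4) by contradiction
  qed
qed

lemma not_contains_P_descent_join:
  assumes "y < x" and above: "\<forall>u\<in>set U. x < u" and below: "\<forall>w\<in>set W. w < x"
    and nga: "no_gapped_ascent (y # W)" and avoid: "\<not> contains_P U"
  shows "\<not> contains_P (x # y # U @ W)"
proof -
  have low: "subseq (b # r) W" if "subseq (b # r) (U @ W)" "b < x" for b r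
    using that(1) by (rule subseq_append_right) (use above that(2) in auto)
  have W: "no_gapped_ascent W" "\<forall>d\<in>set (tl W). \<not> y < d"
    using nga by (simp_all add: no_gapped_ascent_Cons)
  have W_ok: "\<not> b < d" if "subseq [b, c, d] W" for b c d
    using W(1) that unfolding no_gapped_ascent_def by blast
  have after_x: "\<not> b < d" if "subseq [b, c, d] (y # U @ W)" "b < x" "c < x" for b c d
    using that(1) unfolding subseq_Cons_Cons_iff
  proof
    assume "b = y \<and> subseq [c, d] (U @ W)"
    then have "b = y" "subseq [c, d] W" using low[of c "[d]"] that(3) by auto
    moreover have "d \<in> set (tl W)"
      by (rule ex_subseq_pair_iff[THEN iffD1]) (use \<open>subseq [c, d] W\<close> in blast)
    ultimately show "\<not> b < d" using W(2) by blast
  next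
    assume "subseq [b, c, d] (U @ W)"
    then show "\<not> b < d" using low that(2) W_ok by blast
  qed
  have after_y: "\<not> b < d" if "subseq [b, c, d] (U @ W)" "b < y" for b c d
    using low[OF that(1)] that(2) \<open>y < x\<close> W_ok by auto
  have "\<not> contains_P (y # U @ W)"
    unfolding contains_P_Cons[of y]
    using not_contains_P_append[OF above below W(1) avoid] after_y by blast
  then show ?thesis
    unfolding contains_P_Cons[of x] using after_x by blast
qed

theorem not_contains_P_iff:
  assumes "distinct \<pi>"
  shows "\<not> contains_P \<pi> \<longleftrightarrow> sorted_wrt (<) \<pi> \<or>
    (\<exists>R M z V W. \<pi> = R @ M # z # V @ W \<and> sorted_wrt (<) (R @ [M]) \<and> z < M \<and>
       (\<forall>v\<in>set V. M < v) \<and> (\<forall>w\<in>set W. w < M) \<and> no_gapped_ascent (z # W) \<and> \<not> contains_P V)"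
    (is "_ \<longleftrightarrow> _ \<or> ?shape")
proof
  assume avoid: "\<not> contains_P \<pi>"
  show "sorted_wrt (<) \<pi> \<or> ?shape"
  proof (cases "sorted_wrt (<) \<pi>")
    case False
    then obtain R M z t where dec: "\<pi> = R @ M # z # t" "sorted_wrt (<) (R @ [M])" "z < M"
      using first_descent assms by blast
    have "distinct (M # z # t)" using assms dec(1) by simp
    moreover have "\<not> contains_P (M # z # t)"
      using avoid contains_P_sorted_prefix[OF dec(2)] dec(1) by simp
    ultimately obtain V W where VW: "t = V @ W" "\<forall>v\<in>set V. M < v" "\<forall>w\<in>set W. w < M"
      "no_gapped_ascent (z # W)" "\<not> contains_P V"
      using not_contains_P_after_descent[OF _ dec(3)] by blast
    then have "\<pi> = R @ M # z # V @ W" using dec(1) by simp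
    then show ?thesis using dec(2,3) VW(2-5) by blast
  qed simp
next
  assume "sorted_wrt (<) \<pi> \<or> ?shape"
  then show "\<not> contains_P \<pi>"
  proof
    assume ?shape
    then obtain R M z V W where dec: "\<pi> = R @ M # z # V @ W" "sorted_wrt (<) (R @ [M])" "z < M"
      "\<forall>v\<in>set V. M < v" "\<forall>w\<in>set W. w < M" "no_gapped_ascent (z # W)" "\<not> contains_P V"
      by blast
    then have "\<not> contains_P (M # z # V @ W)" by (intro not_contains_P_descent_join)
    then show ?thesis using contains_P_sorted_prefix[OF dec(2)] dec(1) by simp
  qed (rule sorted_not_contains_P)
qed

lemma subseq_map_nth:
  "sorted_wrt (<) is \<Longrightarrow> \<forall>i\<in>set is. i < length xs \<Longrightarrow> subseq (map ((!) xs) is) xs"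
proof (induction xs arbitrary: "is")
  case Nil
  then show ?case by (cases "is") auto
next
  case (Cons x xs)
  note prems = Cons.prems
  let ?pred = "map (\<lambda>j. j - 1)"
  have tail: "subseq (map ((!) (x # xs)) js) xs"
    if "\<forall>j\<in>set js. 0 < j" "sorted_wrt (<) js" "\<forall>j\<in>set js. j < length (x # xs)" for js
  proof -
    have eq: "map ((!) (x # xs)) js = map ((!) xs) (?pred js)"
      using that(1) by (auto simp: nth_Cons')
    have "sorted_wrt (<) (?pred js)"
      using that(1,2) by (auto simp: sorted_wrt_map elim!: sorted_wrt_mono_rel[rotated])
    moreover have "\<forall>j\<in>set (?pred js). j < length xs" using that(1,3) by auto
    ultimately show ?thesis unfolding eq by (rule Cons.IH)
  qed
  show ?case
  proof (cases "is")
    case (Cons i is')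
    then have pos: "\<forall>j\<in>set is'. 0 < j" using prems(1) by auto
    show ?thesis
    proof (cases "i = 0")
      case True
      then show ?thesis using tail[OF pos] Cons prems by simp
    next
      case False
      then have "\<forall>j\<in>set is. 0 < j" using pos Cons by auto
      then have "subseq (map ((!) (x # xs)) is) xs" using tail prems by blast
      then show ?thesis by (rule list_emb_Cons)
    qed
  qed simp
qed

lemma subseq_imp_nth_map:
  "subseq ys xs \<Longrightarrow> \<exists>is. sorted_wrt (<) is \<and> (\<forall>i\<in>set is. i < length xs) \<and> ys = map ((!) xs) is"
proof (induction rule: list_emb.induct)
  case (list_emb_Nil ys)
  then show ?case by (intro exI[of _ "[]"]) simp
next
  case (list_emb_Cons xs ys y)
  then obtain "is" where "sorted_wrt (<) is" "\<forall>i\<in>set is. i < length ys" "xs = map ((!) ys) is"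
    by blast
  then show ?case by (intro exI[of _ "map Suc is"]) (auto simp: sorted_wrt_map)
next
  case (list_emb_Cons2 x y xs ys)
  then obtain "is" where "sorted_wrt (<) is" "\<forall>i\<in>set is. i < length ys" "xs = map ((!) ys) is"
    by blast
  then show ?case
    using list_emb_Cons2.hyps(1) by (intro exI[of _ "0 # map Suc is"]) (auto simp: sorted_wrt_map)
qed

lemma contains_P_iff_positions:
  "contains_P \<pi> \<longleftrightarrow> (\<exists>p0 p1 p2 p3. p0 < p1 \<and> p1 < p2 \<and> p2 < p3 \<and> p3 < length \<pi> \<and>
     \<pi> ! p1 < \<pi> ! p0 \<and> \<pi> ! p2 < \<pi> ! p0 \<and> \<pi> ! p1 < \<pi> ! p3)" (is "_ \<longleftrightarrow> ?positions")
proof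
  assume "contains_P \<pi>"
  then obtain a b c d where h: "subseq [a, b, c, d] \<pi>" "b < a" "c < a" "b < d"
    unfolding contains_P_def by blast
  from subseq_imp_nth_map[OF h(1)] obtain "is" where
    "sorted_wrt (<) is \<and> (\<forall>i\<in>set is. i < length \<pi>) \<and> [a, b, c, d] = map ((!) \<pi>) is" ..
  then have idx: "sorted_wrt (<) is" "\<forall>i\<in>set is. i < length \<pi>" "[a, b, c, d] = map ((!) \<pi>) is"
    by simp_all
  have "length is = 4" using arg_cong[OF idx(3), of length] by simp
  then obtain p0 p1 p2 p3 where "is = [p0, p1, p2, p3]"
    by (auto simp: numeral_eq_Suc length_Suc_conv)
  then show ?positions using idx h by auto
next
  assume ?positions
  then obtain p0 p1 p2 p3 where h: "p0 < p1" "p1 < p2" "p2 < p3" "p3 < length \<pi>"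
    "\<pi> ! p1 < \<pi> ! p0" "\<pi> ! p2 < \<pi> ! p0" "\<pi> ! p1 < \<pi> ! p3" by blast
  have "subseq (map ((!) \<pi>) [p0, p1, p2, p3]) \<pi>" by (rule subseq_map_nth) (use h in auto)
  then show "contains_P \<pi>" unfolding contains_P_def using h by fastforce
qed

lemma atLeastAtMost_1_4: "{1..4::nat} = {1, 2, 3, 4}" by auto

lemma pop_contains_popP_iff: "pop_contains 4 popP \<pi> \<longleftrightarrow> contains_P \<pi>"
proof
  assume "pop_contains 4 popP \<pi>"
  then obtain i where h: "strict_mono_on {1..4} i" "\<forall>x\<in>{1..4}. 1 \<le> i x \<and> i x \<le> length \<pi>"
    "\<forall>(x, y)\<in>popP. \<pi> ! (i y - 1) < \<pi> ! (i x - 1)" unfolding pop_contains_def by blast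
  have "i 1 < i 2" "i 2 < i 3" "i 3 < i 4" using h(1) by (auto intro: strict_mono_onD)
  moreover have "1 \<le> i 1" "i 4 \<le> length \<pi>" using h(2) by auto
  moreover have "\<pi> ! (i 2 - 1) < \<pi> ! (i 1 - 1)" "\<pi> ! (i 3 - 1) < \<pi> ! (i 1 - 1)"
    "\<pi> ! (i 2 - 1) < \<pi> ! (i 4 - 1)" using h(3) unfolding popP_def by auto
  ultimately show "contains_P \<pi>" unfolding contains_P_iff_positions
    by (intro exI[of _ "i 1 - 1"] exI[of _ "i 2 - 1"] exI[of _ "i 3 - 1"] exI[of _ "i 4 - 1"]) auto
next
  assume "contains_P \<pi>"
  then obtain p0 p1 p2 p3 where h: "p0 < p1" "p1 < p2" "p2 < p3" "p3 < length \<pi>"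
    "\<pi> ! p1 < \<pi> ! p0" "\<pi> ! p2 < \<pi> ! p0" "\<pi> ! p1 < \<pi> ! p3"
    unfolding contains_P_iff_positions by blast
  define i where "i x = (if x = 1 then p0 + 1 else if x = 2 then p1 + 1 else if x = 3 then p2 + 1
    else p3 + 1)" for x :: nat
  have "strict_mono_on {1..4} i"
    unfolding strict_mono_on_def atLeastAtMost_1_4 i_def using h by auto
  moreover have "\<forall>x\<in>{1..4}. 1 \<le> i x \<and> i x \<le> length \<pi>"
    unfolding atLeastAtMost_1_4 i_def using h by auto
  moreover have "\<forall>(x, y)\<in>popP. \<pi> ! (i y - 1) < \<pi> ! (i x - 1)"
    unfolding popP_def i_def using h by auto
  ultimately show "pop_contains 4 popP \<pi>" unfolding pop_contains_def by blast
qed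

lemma order_type_of_popP_occurrence:
  fixes V :: "nat \<Rightarrow> nat"
  assumes "V 1 \<noteq> V 2" "V 1 \<noteq> V 3" "V 1 \<noteq> V 4" "V 2 \<noteq> V 3" "V 2 \<noteq> V 4" "V 3 \<noteq> V 4"
    and "V 2 < V 1" "V 3 < V 1" "V 2 < V 4"
  shows "\<exists>q\<in>{[4,1,3,2::nat], [4,2,1,3], [3,2,1,4], [4,1,2,3], [3,1,2,4]}.
           \<forall>x\<in>{1..4}. \<forall>y\<in>{1..4}. V x < V y \<longleftrightarrow> q ! (x - 1) < q ! (y - 1)"
proof (cases "V 1 < V 4")
  case True
  show ?thesis
  proof (cases "V 3 < V 2")
    case True
    then show ?thesis using \<open>V 1 < V 4\<close> assms unfolding atLeastAtMost_1_4
      by (intro bexI[of _ "[3,2,1,4]"]) auto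
  next
    case False
    then show ?thesis using \<open>V 1 < V 4\<close> assms unfolding atLeastAtMost_1_4
      by (intro bexI[of _ "[3,1,2,4]"]) auto
  qed
next
  case False
  then have "V 4 < V 1" using assms(3) by simp
  show ?thesis
  proof (cases "V 3 < V 2")
    case True
    then show ?thesis using \<open>V 4 < V 1\<close> assms unfolding atLeastAtMost_1_4
      by (intro bexI[of _ "[4,2,1,3]"]) auto
  next
    case False
    then have "V 2 < V 3" using assms(4) by simp
    show ?thesis
    proof (cases "V 3 < V 4")
      case True
      then show ?thesis using \<open>V 4 < V 1\<close> \<open>V 2 < V 3\<close> assms unfolding atLeastAtMost_1_4
        by (intro bexI[of _ "[4,1,2,3]"]) auto
    next
      case False
      then show ?thesis using \<open>V 4 < V 1\<close> \<open>V 2 < V 3\<close> assms unfolding atLeastAtMost_1_4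
        by (intro bexI[of _ "[4,1,3,2]"]) auto
    qed
  qed
qed

lemma pop_contains_popP_iff_classical:
  assumes dist: "distinct \<pi>"
  shows "pop_contains 4 popP \<pi> \<longleftrightarrow>
    (\<exists>q\<in>{[4,1,3,2::nat], [4,2,1,3], [3,2,1,4], [4,1,2,3], [3,1,2,4]}. pat_contains q \<pi>)"
    (is "_ \<longleftrightarrow> (\<exists>q\<in>?Q. _)")
proof
  assume "pop_contains 4 popP \<pi>"
  then obtain i where h: "strict_mono_on {1..4} i" "\<forall>x\<in>{1..4}. 1 \<le> i x \<and> i x \<le> length \<pi>"
    "\<forall>(x, y)\<in>popP. \<pi> ! (i x - 1) > \<pi> ! (i y - 1)" unfolding pop_contains_def by blast
  define V where "V x = \<pi> ! (i x - 1)" for x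
  have neq: "V x \<noteq> V y" if "x \<in> {1..4}" "y \<in> {1..4}" "x < y" for x y
  proof -
    have "i x < i y" using h(1) that by (auto intro: strict_mono_onD)
    moreover have "1 \<le> i x" "i y \<le> length \<pi>" using h(2) that by auto
    ultimately have "i x - 1 \<noteq> i y - 1" "i x - 1 < length \<pi>" "i y - 1 < length \<pi>" by auto
    then show ?thesis unfolding V_def using dist by (simp add: nth_eq_iff_index_eq)
  qed
  have d: "V 1 \<noteq> V 2" "V 1 \<noteq> V 3" "V 1 \<noteq> V 4" "V 2 \<noteq> V 3" "V 2 \<noteq> V 4" "V 3 \<noteq> V 4"
    using neq by auto
  have r: "V 2 < V 1" "V 3 < V 1" "V 2 < V 4" using h(3) unfolding popP_def V_def by auto
  obtain q where q: "q \<in> ?Q" "\<forall>x\<in>{1..4}. \<forall>y\<in>{1..4}. V x < V y \<longleftrightarrow> q ! (x - 1) < q ! (y - 1)"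
    using order_type_of_popP_occurrence[OF d r] by blast
  have lq: "length q = 4" using q(1) by auto
  have "pat_contains q \<pi>" unfolding pat_contains_def lq using h(1,2) q(2) unfolding V_def by blast
  then show "\<exists>q\<in>?Q. pat_contains q \<pi>" using q(1) by blast
next
  assume "\<exists>q\<in>?Q. pat_contains q \<pi>"
  then obtain q where q: "q \<in> ?Q" "pat_contains q \<pi>" by blast
  have lq: "length q = 4" using q(1) by auto
  obtain i where h: "strict_mono_on {1..4} i" "\<forall>x\<in>{1..4}. 1 \<le> i x \<and> i x \<le> length \<pi>"
    "\<forall>x\<in>{1..4}. \<forall>y\<in>{1..4}. \<pi> ! (i x - 1) < \<pi> ! (i y - 1) \<longleftrightarrow> q ! (x - 1) < q ! (y - 1)"
    using q(2) unfolding pat_contains_def lq by blast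
  have qr: "q ! 1 < q ! 0" "q ! 2 < q ! 0" "q ! 1 < q ! 3" using q(1) by auto
  have "\<pi> ! (i 2 - 1) < \<pi> ! (i 1 - 1)" using h(3) qr by auto
  moreover have "\<pi> ! (i 3 - 1) < \<pi> ! (i 1 - 1)" using h(3) qr by auto
  moreover have "\<pi> ! (i 2 - 1) < \<pi> ! (i 4 - 1)" using h(3) qr by auto
  ultimately have "\<forall>(x, y)\<in>popP. \<pi> ! (i x - 1) > \<pi> ! (i y - 1)" unfolding popP_def by auto
  then show "pop_contains 4 popP \<pi>" unfolding pop_contains_def using h(1,2) by blast
qed

section \<open>Decomposition of avoiders\<close>

lemma perms_length: "\<pi> \<in> perms n \<Longrightarrow> length \<pi> = n"
  unfolding perms_def using distinct_card by fastforce

lemma finite_perms: "finite (perms n)"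
proof (rule finite_subset)
  show "perms n \<subseteq> {xs. set xs \<subseteq> {1..n} \<and> length xs = n}"
    using perms_length unfolding perms_def by auto
qed (rule finite_lists_length_eq, simp)

lemma sorted_perms_eq_upt:
  assumes "\<pi> \<in> perms n" and "sorted_wrt (<) \<pi>"
  shows "\<pi> = [1..<n+1]"
proof (rule sorted_distinct_set_unique)
  show "sorted \<pi>" "distinct \<pi>" using assms by (auto simp: perms_def strict_sorted_iff)
  show "set \<pi> = set [1..<n+1]"
    using assms(1) unfolding perms_def by (simp add: atLeastLessThanSuc_atLeastAtMost del: upt_Suc)
qed (simp_all del: upt_Suc)

lemma upt_mem_perms: "[1..<n+1] \<in> perms n"
  by (auto simp: perms_def simp del: upt_Suc)

lemma perms_shift:
  "{V. distinct V \<and> set V = {M<..M+k}} = map (\<lambda>u. u + M) ` perms k"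
proof (intro set_eqI iffI)
  fix V assume V: "V \<in> {V. distinct V \<and> set V = {M<..M+k}}"
  let ?U = "map (\<lambda>v. v - M) V"
  have "V = map (\<lambda>u. u + M) ?U" using V by (auto intro!: map_idI[symmetric])
  moreover have "?U \<in> perms k"
  proof -
    have "inj_on (\<lambda>v. v - M) (set V)" using V by (auto intro!: inj_onI)
    moreover have "(\<lambda>v. v - M) ` {M<..M+k} = {1..k}"
      by (auto simp: image_iff intro!: bexI[of _ "x + M" for x])
    ultimately show ?thesis using V by (simp add: perms_def distinct_map)
  qed
  ultimately show "V \<in> map (\<lambda>u. u + M) ` perms k" by blast
next
  fix V assume "V \<in> map (\<lambda>u. u + M) ` perms k"
  then obtain U where "U \<in> perms k" "V = map (\<lambda>u. u + M) U" by blast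
  moreover have "(\<lambda>u. u + M) ` {1..k} = {M<..M+k}"
    by (auto simp: image_iff intro!: bexI[of _ "x - M" for x])
  ultimately show "V \<in> {V. distinct V \<and> set V = {M<..M+k}}"
    by (auto simp: perms_def distinct_map)
qed

lemma contains_P_map_shift: "contains_P (map (\<lambda>u. u + M) U) \<longleftrightarrow> contains_P U"
proof
  assume "contains_P (map (\<lambda>u. u + M) U)"
  then obtain a b c d where h: "subseq [a, b, c, d] (map (\<lambda>u. u + M) U)" "b < a" "c < a" "b < d"
    unfolding contains_P_def by blast
  have "\<forall>v\<in>set [a, b, c, d]. M \<le> v" using set_mono_subseq[OF h(1)] by auto
  moreover have "subseq (map (\<lambda>u. u - M) [a, b, c, d]) U"
    using subseq_map[OF h(1), of "\<lambda>u. u - M"] by (simp add: comp_def)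
  ultimately show "contains_P U" unfolding contains_P_def using h(2-4)
    by (intro exI[of _ "a - M"] exI[of _ "b - M"] exI[of _ "c - M"] exI[of _ "d - M"]) auto
next
  assume "contains_P U"
  then obtain a b c d where h: "subseq [a, b, c, d] U" "b < a" "c < a" "b < d"
    unfolding contains_P_def by blast
  from h(1) have "subseq (map (\<lambda>u. u + M) [a, b, c, d]) (map (\<lambda>u. u + M) U)"
    by (rule subseq_map)
  then show "contains_P (map (\<lambda>u. u + M) U)" unfolding contains_P_def using h(2-4) by fastforce
qed

lemma interval_split_at:
  fixes M n :: nat
  assumes "\<forall>x\<in>A. x < M" and "\<forall>v\<in>B. M < v"
  shows "A \<union> {M} \<union> B = {1..n} \<longleftrightarrow> M \<in> {1..n} \<and> A = {1..<M} \<and> B = {M<..n}"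
proof
  assume split: "A \<union> {M} \<union> B = {1..n}"
  then have "M \<in> {1..n}" by blast
  moreover have "A = {x \<in> {1..n}. x < M}" "B = {x \<in> {1..n}. M < x}"
    unfolding split[symmetric] using assms by auto
  ultimately show "M \<in> {1..n} \<and> A = {1..<M} \<and> B = {M<..n}" by auto
qed auto

definition avoiders :: "nat \<Rightarrow> nat list set" where
  "avoiders n = {\<pi> \<in> perms n. \<not> contains_P \<pi>}"

text \<open>A non-increasing avoider has the shape \<open>R @ M # z # V @ W\<close> of \<open>not_contains_P_iff\<close>;
  \<open>pairs (M - 1)\<close> collects the possible \<open>(R, z # W)\<close>, i.e. what is left when \<open>M\<close> and the
  block \<open>V\<close> of entries above \<open>M\<close> are removed.\<close>
definition pairs :: "nat \<Rightarrow> (nat list \<times> nat list) set" where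
  "pairs m = {(R, Z). sorted_wrt (<) R \<and> no_gapped_ascent Z \<and> distinct (R @ Z) \<and> set (R @ Z) = {1..m}}"

definition pairs_ne :: "nat \<Rightarrow> (nat list \<times> nat list) set" where
  "pairs_ne m = {(R, Z) \<in> pairs m. Z \<noteq> []}"

definition pairs_hd_max :: "nat \<Rightarrow> (nat list \<times> nat list) set" where
  "pairs_hd_max m = {(R, Z) \<in> pairs m. Z \<noteq> [] \<and> (\<forall>d\<in>set (tl Z). d < hd Z)}"

fun assemble :: "nat \<Rightarrow> nat list \<times> nat list \<Rightarrow> nat list \<Rightarrow> nat list" where
  "assemble M (R, Z) U = R @ M # hd Z # map (\<lambda>u. u + M) U @ tl Z"

lemma finite_avoiders: "finite (avoiders n)"
  unfolding avoiders_def using finite_perms by simp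

lemma upt_mem_avoiders: "[1..<n+1] \<in> avoiders n"
  unfolding avoiders_def using upt_mem_perms sorted_not_contains_P
  by (simp add: strict_sorted_iff del: upt_Suc)

lemma assemble_mem_avoiders:
  assumes M: "M \<in> {1..n}" and RZ: "(R, Z) \<in> pairs_ne (M - 1)" and U: "U \<in> avoiders (n - M)"
  shows "assemble M (R, Z) U \<in> avoiders n"
proof -
  obtain z W where Z: "Z = z # W" using RZ by (cases Z) (auto simp: pairs_ne_def)
  let ?V = "map (\<lambda>u. u + M) U"
  have low: "sorted_wrt (<) R" "no_gapped_ascent (z # W)" "distinct (R @ z # W)"
    "set (R @ z # W) = {1..<M}"
    using RZ M Z by (auto simp: pairs_ne_def pairs_def)
  have "U \<in> perms (n - M)" and "\<not> contains_P ?V"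
    using U contains_P_map_shift[of M U] by (auto simp: avoiders_def)
  then have "?V \<in> {V. distinct V \<and> set V = {M<..M + (n - M)}}" unfolding perms_shift by blast
  then have high: "distinct ?V" "set ?V = {M<..n}" "\<not> contains_P ?V"
    using M \<open>\<not> contains_P ?V\<close> by auto
  have lt: "\<forall>x\<in>set (R @ z # W). x < M" "\<forall>v\<in>set ?V. M < v"
    using low(4) high(2) by auto
  have "set (R @ M # z # ?V @ W) = set (R @ z # W) \<union> {M} \<union> set ?V" by auto
  also have "\<dots> = {1..n}" using interval_split_at[OF lt] low(4) high(2) M by blast
  finally have "R @ M # z # ?V @ W \<in> perms n"
    using low(3) high(1) lt unfolding perms_def by auto
  moreover have "\<not> contains_P (R @ M # z # ?V @ W)"
  proof -
    have "sorted_wrt (<) (R @ [M])" using low(1) lt(1) by (simp add: sorted_wrt_append)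
    moreover have "\<not> contains_P (M # z # ?V @ W)"
      by (rule not_contains_P_descent_join) (use lt low(2) high(3) in auto)
    ultimately show ?thesis using contains_P_sorted_prefix by blast
  qed
  ultimately show ?thesis using Z by (simp add: avoiders_def)
qed

lemma avoiders_decompose:
  assumes "\<pi> \<in> avoiders n" and "\<not> sorted_wrt (<) \<pi>"
  shows "\<exists>M RZ U. M \<in> {1..n} \<and> RZ \<in> pairs_ne (M - 1) \<and> U \<in> avoiders (n - M)
           \<and> \<pi> = assemble M RZ U"
proof -
  have \<pi>: "distinct \<pi>" "set \<pi> = {1..n}" "\<not> contains_P \<pi>"
    using assms(1) by (auto simp: avoiders_def perms_def)
  obtain R M z V W where dec: "\<pi> = R @ M # z # V @ W" "sorted_wrt (<) (R @ [M])" "z < M"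
    "\<forall>v\<in>set V. M < v" "\<forall>w\<in>set W. w < M" "no_gapped_ascent (z # W)" "\<not> contains_P V"
    using not_contains_P_iff[OF \<pi>(1)] \<pi>(3) assms(2) by blast
  have lt: "\<forall>x\<in>set (R @ z # W). x < M" "\<forall>v\<in>set V. M < v"
    using dec(2-5) by (auto simp: sorted_wrt_append)
  have "set (R @ z # W) \<union> {M} \<union> set V = {1..n}" using \<pi>(2) dec(1) by auto
  then have M: "M \<in> {1..n}" and "set (R @ z # W) = {1..<M}" "set V = {M<..n}"
    unfolding interval_split_at[OF lt] by blast+
  then have sets: "set (R @ z # W) = {1..M - 1}" "set V = {M<..M + (n - M)}" by auto
  have "V \<in> {V. distinct V \<and> set V = {M<..M + (n - M)}}"
    using sets(2) \<pi>(1) unfolding dec(1) by simp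
  then obtain U where U: "U \<in> perms (n - M)" "V = map (\<lambda>u. u + M) U"
    unfolding perms_shift by blast
  have "(R, z # W) \<in> pairs_ne (M - 1)"
    using dec(2,6) \<pi>(1) sets(1) unfolding dec(1) by (auto simp: pairs_ne_def pairs_def sorted_wrt_append)
  moreover have "U \<in> avoiders (n - M)"
    using U dec(7) contains_P_map_shift by (simp add: avoiders_def)
  moreover have "\<pi> = assemble M (R, z # W) U" using dec(1) U(2) by simp
  ultimately show ?thesis using M by blast
qed

lemma pairs_ne_below:
  assumes "(R, Z) \<in> pairs_ne (M - 1)"
  shows "hd Z < M" and "sorted_wrt (<) (R @ [M])"
proof -
  have "sorted_wrt (<) R" "Z \<noteq> []" "\<forall>v\<in>set (R @ Z). v < M"
    using assms by (auto simp: pairs_ne_def pairs_def)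
  then show "hd Z < M" "sorted_wrt (<) (R @ [M])" by (auto simp: sorted_wrt_append)
qed

lemma assemble_not_sorted:
  assumes "(R, Z) \<in> pairs_ne (M - 1)"
  shows "\<not> sorted_wrt (<) (assemble M (R, Z) U)"
  using pairs_ne_below(1)[OF assms] by (auto simp: sorted_wrt_append)

lemma assemble_inj_on:
  "inj_on (\<lambda>(M, RZ, U). assemble M RZ U) (SIGMA M:{1..n}. pairs_ne (M - 1) \<times> avoiders (n - M))"
proof (rule inj_onI)
  fix p q
  assume "p \<in> (SIGMA M:{1..n}. pairs_ne (M - 1) \<times> avoiders (n - M))"
    and "q \<in> (SIGMA M:{1..n}. pairs_ne (M - 1) \<times> avoiders (n - M))"
  then obtain M1 R1 Z1 U1 M2 R2 Z2 U2 where pq: "p = (M1, (R1, Z1), U1)" "q = (M2, (R2, Z2), U2)"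
    and 1: "(R1, Z1) \<in> pairs_ne (M1 - 1)" "U1 \<in> avoiders (n - M1)"
    and 2: "(R2, Z2) \<in> pairs_ne (M2 - 1)" "U2 \<in> avoiders (n - M2)"
    by (cases p, cases q) auto
  assume "(\<lambda>(M, RZ, U). assemble M RZ U) p = (\<lambda>(M, RZ, U). assemble M RZ U) q"
  then have eq: "assemble M1 (R1, Z1) U1 = assemble M2 (R2, Z2) U2" using pq by simp
  have "R1 @ M1 # hd Z1 # (map (\<lambda>u. u + M1) U1 @ tl Z1) =
      R2 @ M2 # hd Z2 # (map (\<lambda>u. u + M2) U2 @ tl Z2)" using eq by simp
  then have same: "R1 = R2" "M1 = M2" "hd Z1 = hd Z2"
    "map (\<lambda>u. u + M1) U1 @ tl Z1 = map (\<lambda>u. u + M1) U2 @ tl Z2"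
    by (auto dest!: first_descent_unique
        simp: pairs_ne_below[OF 1(1)] pairs_ne_below[OF 2(1)])
  moreover have "length U1 = length U2"
    using 1(2) 2(2) same(2) perms_length by (auto simp: avoiders_def)
  ultimately have "U1 = U2" "tl Z1 = tl Z2"
    by (auto simp: append_eq_append_conv inj_map_eq_map inj_on_def)
  moreover have "Z1 \<noteq> []" "Z2 \<noteq> []" using 1(1) 2(1) by (auto simp: pairs_ne_def)
  ultimately show "p = q" using same pq by (metis list.collapse)
qed

lemma finite_pairs: "finite (pairs m)"
proof (rule finite_subset)
  let ?L = "{xs. set xs \<subseteq> {1..m} \<and> length xs \<le> m}"
  have "xs \<in> ?L" if "distinct xs" "set xs \<subseteq> {1..m}" for xs
    using that card_mono[OF finite_atLeastAtMost that(2)] by (simp add: distinct_card)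
  then show "pairs m \<subseteq> ?L \<times> ?L" by (auto simp: pairs_def)
  show "finite (?L \<times> ?L)" using finite_lists_length_le[of "{1..m}" m] by simp
qed

lemma finite_pairs_ne: "finite (pairs_ne m)"
  by (rule finite_subset[OF _ finite_pairs]) (auto simp: pairs_ne_def)

lemma card_avoiders:
  "card (avoiders n) = 1 + (\<Sum>M = 1..n. card (pairs_ne (M - 1)) * card (avoiders (n - M)))"
proof -
  let ?S = "SIGMA M:{1..n}. pairs_ne (M - 1) \<times> avoiders (n - M)"
  let ?f = "\<lambda>(M, RZ, U). assemble M RZ U"
  have "avoiders n \<subseteq> insert [1..<n+1] (?f ` ?S)"
  proof
    fix \<pi> assume \<pi>: "\<pi> \<in> avoiders n"
    show "\<pi> \<in> insert [1..<n+1] (?f ` ?S)"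
    proof (cases "sorted_wrt (<) \<pi>")
      case True
      then show ?thesis using \<pi> sorted_perms_eq_upt by (simp add: avoiders_def)
    next
      case False
      then show ?thesis using avoiders_decompose[OF \<pi>] by force
    qed
  qed
  moreover have "insert [1..<n+1] (?f ` ?S) \<subseteq> avoiders n"
    using upt_mem_avoiders assemble_mem_avoiders by auto
  ultimately have "avoiders n = insert [1..<n+1] (?f ` ?S)" by blast
  moreover have "[1..<n+1] \<notin> ?f ` ?S"
  proof
    assume "[1..<n+1] \<in> ?f ` ?S"
    then obtain M R Z U where "(R, Z) \<in> pairs_ne (M - 1)" "[1..<n+1] = assemble M (R, Z) U" by auto
    moreover have "sorted_wrt (<) [1..<n+1]" by (simp add: strict_sorted_iff del: upt_Suc)
    ultimately show False using assemble_not_sorted by metis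
  qed
  moreover have "finite ?S" using finite_pairs_ne finite_avoiders by auto
  ultimately have "card (avoiders n) = Suc (card (?f ` ?S))" by (simp del: upt_Suc)
  also have "card (?f ` ?S) = card ?S" using assemble_inj_on by (rule card_image)
  finally show ?thesis
    by (simp add: card_SigmaI card_cartesian_product finite_avoiders finite_pairs_ne)
qed

section \<open>Counting the pairs\<close>

lemma max_in_first_two:
  assumes "no_gapped_ascent Z" "distinct Z" "m \<in> set Z" "\<forall>v\<in>set Z. v \<le> m"
  shows "(\<exists>Z'. Z = m # Z') \<or> (\<exists>z Z'. Z = z # m # Z')"
proof (rule ccontr)
  assume "\<not> ?thesis"
  then obtain z1 z2 Z3 where Z: "Z = z1 # z2 # Z3" "m \<in> set Z3" "z1 \<noteq> m"
    using assms(3) by (cases Z; cases "tl Z") auto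
  then have "z1 < m" using assms(4) by fastforce
  then show False using assms(1) Z by (simp add: no_gapped_ascent_Cons)
qed

lemma perm_insert_top_iff:
  "distinct (xs @ Suc k # ys) \<and> set (xs @ Suc k # ys) = {1..Suc k} \<longleftrightarrow>
   distinct (xs @ ys) \<and> set (xs @ ys) = {1..k}"
proof
  assume top: "distinct (xs @ Suc k # ys) \<and> set (xs @ Suc k # ys) = {1..Suc k}"
  then have "set (xs @ ys) = set (xs @ Suc k # ys) - {Suc k}" by auto
  also have "\<dots> = {1..k}" using top by auto
  finally show "distinct (xs @ ys) \<and> set (xs @ ys) = {1..k}" using top by simp
next
  assume low: "distinct (xs @ ys) \<and> set (xs @ ys) = {1..k}"
  then have "Suc k \<notin> set (xs @ ys)" by (metis atLeastAtMost_iff not_less_eq_eq order_refl)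
  moreover have "set (xs @ Suc k # ys) = insert (Suc k) (set (xs @ ys))" by auto
  moreover have "insert (Suc k) {1..k} = {1..Suc k}" by auto
  ultimately show "distinct (xs @ Suc k # ys) \<and> set (xs @ Suc k # ys) = {1..Suc k}"
    using low by simp
qed

lemma mem_pairs:
  "(R, Z) \<in> pairs m \<longleftrightarrow>
     sorted_wrt (<) R \<and> no_gapped_ascent Z \<and> distinct (R @ Z) \<and> set (R @ Z) = {1..m}"
  by (simp add: pairs_def)

lemma le_of_set_append_eq: "set (R @ Z) = {1..k} \<Longrightarrow> v \<in> set R \<or> v \<in> set Z \<Longrightarrow> v \<le> k"
  by (metis Un_iff atLeastAtMost_iff set_append)

lemma pairs_Suc_snoc_iff: "(R @ [Suc k], Z) \<in> pairs (Suc k) \<longleftrightarrow> (R, Z) \<in> pairs k"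
proof -
  have "(R @ [Suc k], Z) \<in> pairs (Suc k) \<longleftrightarrow>
      sorted_wrt (<) (R @ [Suc k]) \<and> no_gapped_ascent Z \<and> distinct (R @ Z) \<and> set (R @ Z) = {1..k}"
    unfolding mem_pairs append_assoc append_Cons append_Nil perm_insert_top_iff ..
  moreover have "sorted_wrt (<) (R @ [Suc k]) \<longleftrightarrow> sorted_wrt (<) R" if "set (R @ Z) = {1..k}"
  proof -
    have "\<forall>x\<in>set R. x < Suc k" using le_of_set_append_eq[OF that] by (simp add: le_imp_less_Suc)
    then show ?thesis by (simp add: sorted_wrt_append)
  qed
  ultimately show ?thesis unfolding mem_pairs by blast
qed

lemma pairs_Suc_Cons_iff: "(R, Suc k # Z) \<in> pairs (Suc k) \<longleftrightarrow> (R, Z) \<in> pairs k"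
proof -
  have "(R, Suc k # Z) \<in> pairs (Suc k) \<longleftrightarrow>
      sorted_wrt (<) R \<and> no_gapped_ascent (Suc k # Z) \<and> distinct (R @ Z) \<and> set (R @ Z) = {1..k}"
    unfolding mem_pairs perm_insert_top_iff ..
  moreover have "no_gapped_ascent (Suc k # Z) \<longleftrightarrow> no_gapped_ascent Z" if "set (R @ Z) = {1..k}"
  proof -
    have "\<forall>d\<in>set (tl Z). \<not> Suc k < d" using le_of_set_append_eq[OF that] in_set_tlD by fastforce
    then show ?thesis by (simp add: no_gapped_ascent_Cons)
  qed
  ultimately show ?thesis unfolding mem_pairs by blast
qed

lemma pairs_Suc_second_iff:
  "(R, z # Suc k # W) \<in> pairs (Suc k) \<longleftrightarrow> (R, z # W) \<in> pairs k \<and> (\<forall>v\<in>set W. v < z)"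
proof -
  have "(R, z # Suc k # W) \<in> pairs (Suc k) \<longleftrightarrow> sorted_wrt (<) R \<and>
      no_gapped_ascent (z # Suc k # W) \<and> distinct (R @ z # W) \<and> set (R @ z # W) = {1..k}"
    using perm_insert_top_iff[of "R @ [z]" k W] unfolding mem_pairs by simp
  moreover have "no_gapped_ascent (z # Suc k # W) \<longleftrightarrow> no_gapped_ascent (z # W) \<and> (\<forall>v\<in>set W. v < z)"
    if "distinct (R @ z # W)" "set (R @ z # W) = {1..k}"
  proof -
    have "\<forall>d\<in>set (tl W). \<not> Suc k < d" using le_of_set_append_eq[OF that(2)] in_set_tlD by fastforce
    moreover have "(\<forall>v\<in>set W. \<not> z < v) \<longleftrightarrow> (\<forall>v\<in>set W. v < z)" using that(1) by force
    moreover have "\<forall>d\<in>set (tl W). d \<in> set W" using in_set_tlD by fast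
    ultimately show ?thesis unfolding no_gapped_ascent_Cons[of z] no_gapped_ascent_Cons[of "Suc k"]
      by auto
  qed
  ultimately show ?thesis unfolding mem_pairs by blast
qed

lemma pairs_Suc_shape:
  assumes "(R, Z) \<in> pairs (Suc k)"
  shows "(\<exists>R'. R = R' @ [Suc k]) \<or> (\<exists>Z'. Z = Suc k # Z') \<or> (\<exists>z W. Z = z # Suc k # W)"
proof -
  have R: "sorted_wrt (<) R" and Z: "no_gapped_ascent Z" "distinct Z"
    and set: "set (R @ Z) = {1..Suc k}" using assms by (auto simp: pairs_def)
  have "Suc k \<in> set (R @ Z)" unfolding set by simp
  then consider "Suc k \<in> set R" | "Suc k \<in> set Z" by auto
  then show ?thesis
  proof cases
    case 1
    then obtain R1 R2 where R12: "R = R1 @ Suc k # R2" by (meson split_list)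
    have "set R2 \<subseteq> set (R @ Z)" unfolding R12 by auto
    then have "\<forall>v\<in>set R2. v \<le> Suc k" unfolding set by auto
    moreover have "\<forall>v\<in>set R2. Suc k < v" using R unfolding R12 by (simp add: sorted_wrt_append)
    ultimately have "R2 = []" by (cases R2) auto
    then show ?thesis using R12 by blast
  next
    case 2
    have "set Z \<subseteq> set (R @ Z)" by auto
    then have "\<forall>v\<in>set Z. v \<le> Suc k" unfolding set by auto
    then show ?thesis using max_in_first_two[OF Z 2] by blast
  qed
qed

fun snoc_R :: "nat \<Rightarrow> nat list \<times> nat list \<Rightarrow> nat list \<times> nat list" where
  "snoc_R m (R, Z) = (R @ [m], Z)"

fun cons_Z :: "nat \<Rightarrow> nat list \<times> nat list \<Rightarrow> nat list \<times> nat list" where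
  "cons_Z m (R, Z) = (R, m # Z)"

fun insert_second_Z :: "nat \<Rightarrow> nat list \<times> nat list \<Rightarrow> nat list \<times> nat list" where
  "insert_second_Z m (R, Z) = (R, hd Z # m # tl Z)"

lemma pairs_top_notin: "(R, Z) \<in> pairs k \<Longrightarrow> Suc k \<notin> set R \<and> Suc k \<notin> set Z"
  using le_of_set_append_eq[of R Z k "Suc k"] by (auto simp: mem_pairs)

lemma pairs_ne_Suc:
  "pairs_ne (Suc k) = snoc_R (Suc k) ` pairs_ne k \<union> cons_Z (Suc k) ` pairs k
     \<union> insert_second_Z (Suc k) ` pairs_hd_max k"
proof (intro equalityI subsetI)
  fix p assume "p \<in> pairs_ne (Suc k)"
  then obtain R Z where p: "p = (R, Z)" "(R, Z) \<in> pairs (Suc k)" "Z \<noteq> []"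
    by (auto simp: pairs_ne_def)
  from pairs_Suc_shape[OF p(2)]
  show "p \<in> snoc_R (Suc k) ` pairs_ne k \<union> cons_Z (Suc k) ` pairs k
      \<union> insert_second_Z (Suc k) ` pairs_hd_max k"
  proof (elim disjE exE)
    fix R' assume R: "R = R' @ [Suc k]"
    then have "(R', Z) \<in> pairs_ne k" using p pairs_Suc_snoc_iff by (simp add: pairs_ne_def)
    moreover have "p = snoc_R (Suc k) (R', Z)" using p R by simp
    ultimately show ?thesis by blast
  next
    fix Z' assume Z: "Z = Suc k # Z'"
    then have "(R, Z') \<in> pairs k" using p pairs_Suc_Cons_iff by simp
    moreover have "p = cons_Z (Suc k) (R, Z')" using p Z by simp
    ultimately show ?thesis by blast
  next
    fix z W assume Z: "Z = z # Suc k # W"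
    then have "(R, z # W) \<in> pairs_hd_max k"
      using p pairs_Suc_second_iff by (simp add: pairs_hd_max_def)
    moreover have "p = insert_second_Z (Suc k) (R, z # W)" using p Z by simp
    ultimately show ?thesis by blast
  qed
next
  fix p assume "p \<in> snoc_R (Suc k) ` pairs_ne k \<union> cons_Z (Suc k) ` pairs k
      \<union> insert_second_Z (Suc k) ` pairs_hd_max k"
  then show "p \<in> pairs_ne (Suc k)"
  proof (elim UnE imageE)
    fix q assume "q \<in> pairs_ne k" "p = snoc_R (Suc k) q"
    then show ?thesis using pairs_Suc_snoc_iff by (cases q) (auto simp: pairs_ne_def)
  next
    fix q assume "q \<in> pairs k" "p = cons_Z (Suc k) q"
    then show ?thesis using pairs_Suc_Cons_iff by (cases q) (auto simp: pairs_ne_def)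
  next
    fix q assume q: "q \<in> pairs_hd_max k" "p = insert_second_Z (Suc k) q"
    then obtain R z W where "q = (R, z # W)" by (auto simp: pairs_hd_max_def neq_Nil_conv)
    then show ?thesis using q pairs_Suc_second_iff by (auto simp: pairs_ne_def pairs_hd_max_def)
  qed
qed

lemma pairs_hd_max_Suc:
  "pairs_hd_max (Suc k) = snoc_R (Suc k) ` pairs_hd_max k \<union> cons_Z (Suc k) ` pairs k"
proof (intro equalityI subsetI)
  fix p assume "p \<in> pairs_hd_max (Suc k)"
  then obtain R Z where p: "p = (R, Z)" "(R, Z) \<in> pairs (Suc k)" "Z \<noteq> []"
    "\<forall>d\<in>set (tl Z). d < hd Z" by (auto simp: pairs_hd_max_def)
  from pairs_Suc_shape[OF p(2)]
  show "p \<in> snoc_R (Suc k) ` pairs_hd_max k \<union> cons_Z (Suc k) ` pairs k"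
  proof (elim disjE exE)
    fix R' assume R: "R = R' @ [Suc k]"
    then have "(R', Z) \<in> pairs_hd_max k" using p pairs_Suc_snoc_iff by (simp add: pairs_hd_max_def)
    moreover have "p = snoc_R (Suc k) (R', Z)" using p R by simp
    ultimately show ?thesis by blast
  next
    fix Z' assume Z: "Z = Suc k # Z'"
    then have "(R, Z') \<in> pairs k" using p pairs_Suc_Cons_iff by simp
    moreover have "p = cons_Z (Suc k) (R, Z')" using p Z by simp
    ultimately show ?thesis by blast
  next
    fix z W assume Z: "Z = z # Suc k # W"
    then have "(R, z # W) \<in> pairs k" using p(2) pairs_Suc_second_iff by simp
    then have "z \<le> k" using le_of_set_append_eq[of R "z # W" k z] by (simp add: mem_pairs)
    then show ?thesis using p(4) Z by simp
  qed
next
  fix p assume "p \<in> snoc_R (Suc k) ` pairs_hd_max k \<union> cons_Z (Suc k) ` pairs k"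
  then show "p \<in> pairs_hd_max (Suc k)"
  proof (elim UnE imageE)
    fix q assume "q \<in> pairs_hd_max k" "p = snoc_R (Suc k) q"
    then show ?thesis using pairs_Suc_snoc_iff by (cases q) (auto simp: pairs_hd_max_def)
  next
    fix q assume q: "q \<in> pairs k" "p = cons_Z (Suc k) q"
    obtain R Z where "q = (R, Z)" by fastforce
    moreover have "\<forall>d\<in>set Z. d < Suc k"
      using q(1) le_of_set_append_eq[of R Z k] \<open>q = (R, Z)\<close> by (auto simp: mem_pairs less_Suc_eq_le)
    ultimately show ?thesis using q pairs_Suc_Cons_iff by (auto simp: pairs_hd_max_def)
  qed
qed

lemma finite_pairs_hd_max: "finite (pairs_hd_max m)"
  by (rule finite_subset[OF _ finite_pairs]) (auto simp: pairs_hd_max_def)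

lemma pairs_eq_insert_pairs_ne: "pairs m = insert ([1..<m+1], []) (pairs_ne m)"
proof (intro equalityI subsetI)
  fix p assume p: "p \<in> pairs m"
  show "p \<in> insert ([1..<m+1], []) (pairs_ne m)"
  proof (cases "snd p = []")
    case True
    then have "fst p \<in> perms m" "sorted_wrt (<) (fst p)" using p by (auto simp: pairs_def perms_def)
    then show ?thesis using True sorted_perms_eq_upt by (metis insertI1 prod.collapse)
  qed (use p in \<open>auto simp: pairs_ne_def\<close>)
next
  fix p assume "p \<in> insert ([1..<m+1], []) (pairs_ne m)"
  moreover have "([1..<m+1], []) \<in> pairs m"
    using upt_mem_perms[of m] by (simp add: mem_pairs perms_def no_gapped_ascent_Nil strict_sorted_iff
        del: upt_Suc)
  ultimately show "p \<in> pairs m" by (auto simp: pairs_ne_def)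
qed

lemma card_pairs: "card (pairs m) = card (pairs_ne m) + 1"
  unfolding pairs_eq_insert_pairs_ne using finite_pairs_ne by (simp add: pairs_ne_def)

lemma pairs_ne_0: "pairs_ne 0 = {}"
  by (auto simp: pairs_ne_def pairs_def)

lemma pairs_hd_max_0: "pairs_hd_max 0 = {}"
  by (auto simp: pairs_hd_max_def pairs_def)

lemma card_pairs_ne_Suc:
  "card (pairs_ne (Suc k)) = card (pairs_ne k) + card (pairs k) + card (pairs_hd_max k)"
proof -
  let ?A = "snoc_R (Suc k) ` pairs_ne k" and ?B = "cons_Z (Suc k) ` pairs k"
    and ?C = "insert_second_Z (Suc k) ` pairs_hd_max k"
  have "Suc k \<in> set (fst p)" if "p \<in> ?A" for p using that by auto
  moreover have "Suc k \<notin> set (fst p)" if "p \<in> ?B \<union> ?C" for p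
    using that pairs_top_notin by (auto simp: pairs_hd_max_def)
  moreover have "hd (snd p) = Suc k" if "p \<in> ?B" for p using that by auto
  moreover have "hd (snd p) \<noteq> Suc k" if p: "p \<in> ?C" for p
  proof -
    obtain q where "q \<in> pairs_hd_max k" "p = insert_second_Z (Suc k) q" using p by blast
    moreover obtain R Z where "q = (R, Z)" by fastforce
    ultimately have "(R, Z) \<in> pairs_hd_max k" "p = insert_second_Z (Suc k) (R, Z)" by simp_all
    then have "Suc k \<notin> set Z" "hd Z \<in> set Z" "hd (snd p) = hd Z"
      using pairs_top_notin by (auto simp: pairs_hd_max_def)
    then show ?thesis by auto
  qed
  ultimately have disjoint: "?A \<inter> ?B = {}" "(?A \<union> ?B) \<inter> ?C = {}" by blast+
  have "inj_on (snoc_R (Suc k)) (pairs_ne k)" "inj_on (cons_Z (Suc k)) (pairs k)"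
    by (auto simp: inj_on_def)
  moreover have "inj_on (insert_second_Z (Suc k)) (pairs_hd_max k)"
    by (auto simp: inj_on_def pairs_hd_max_def intro: list.expand)
  moreover have "card (pairs_ne (Suc k)) = card ?A + card ?B + card ?C"
    unfolding pairs_ne_Suc using disjoint finite_pairs finite_pairs_ne finite_pairs_hd_max
    by (simp add: card_Un_disjoint)
  ultimately show ?thesis by (simp add: card_image)
qed

lemma card_pairs_hd_max_Suc: "card (pairs_hd_max (Suc k)) = card (pairs_hd_max k) + card (pairs k)"
proof -
  let ?A = "snoc_R (Suc k) ` pairs_hd_max k" and ?B = "cons_Z (Suc k) ` pairs k"
  have "?A \<inter> ?B = {}" using pairs_top_notin by (fastforce simp: pairs_hd_max_def)
  moreover have "inj_on (snoc_R (Suc k)) (pairs_hd_max k)" "inj_on (cons_Z (Suc k)) (pairs k)"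
    by (auto simp: inj_on_def)
  ultimately show ?thesis unfolding pairs_hd_max_Suc
    using finite_pairs finite_pairs_hd_max by (simp add: card_Un_disjoint card_image)
qed

section \<open>Generating function and binomial formula\<close>

unbundle fps_syntax

lemma fps_convolution_recurrence:
  fixes a h :: "nat \<Rightarrow> nat"
  assumes "\<And>n. a n = 1 + (\<Sum>M\<in>{1..n}. h (M - 1) * a (n - M))"
  shows "Abs_fps (\<lambda>n. real (a n)) =
    Abs_fps (\<lambda>_. 1) + fps_X * (Abs_fps (\<lambda>n. real (h n)) * Abs_fps (\<lambda>n. real (a n)))"
proof (rule fps_ext)
  fix n show "Abs_fps (\<lambda>n. real (a n)) $ n =
    (Abs_fps (\<lambda>_. 1) + fps_X * (Abs_fps (\<lambda>n. real (h n)) * Abs_fps (\<lambda>n. real (a n)))) $ n"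
  proof (cases n)
    case 0 then show ?thesis using assms[of 0] by simp
  next
    case (Suc k)
    have "(\<Sum>M\<in>{1..Suc k}. h (M - 1) * a (Suc k - M)) = (\<Sum>i\<in>{0..k}. h i * a (k - i))"
      using sum.shift_bounds_cl_Suc_ivl[of "\<lambda>M. h (M - 1) * a (Suc k - M)" 0 k] by simp
    then have "real (a (Suc k)) = 1 + (\<Sum>i = 0..k. real (h i) * real (a (k - i)))"
      using assms[of "Suc k"] by (simp add: of_nat_sum)
    then show ?thesis using Suc by simp (simp add: fps_mult_nth)
  qed
qed

lemma fps_equation_of_recurrences:
  fixes a h h1 :: "nat \<Rightarrow> nat"
  assumes a: "\<And>n. a n = 1 + (\<Sum>M\<in>{1..n}. h (M - 1) * a (n - M))"
    and "h 0 = 0" and "h1 0 = 0"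
    and "\<And>k. h (Suc k) = h k + (h k + 1) + h1 k"
    and "\<And>k. h1 (Suc k) = h1 k + (h k + 1)"
  shows "(1 - 4 * fps_X + 3 * fps_X ^ 2 - fps_X ^ 3) * Abs_fps (\<lambda>n. real (a n))
    = (1 - 3 * fps_X + fps_X ^ 2 :: real fps)"
proof -
  define A where "A = Abs_fps (\<lambda>n. real (a n))"
  define H where "H = Abs_fps (\<lambda>n. real (h n))"
  define H1 where "H1 = Abs_fps (\<lambda>n. real (h1 n))"
  define E where "E = (Abs_fps (\<lambda>n. 1) :: real fps)"
  define X where "X = (fps_X :: real fps)"
  have "H = X * (H + H + E + H1)"
  proof (rule fps_ext)
    show "H $ n = (X * (H + H + E + H1)) $ n" for n
      by (cases n) (simp_all add: H_def E_def H1_def X_def assms(2,4) numeral_fps_const)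
  qed
  moreover have "H1 = X * (H1 + H + E)"
  proof (rule fps_ext)
    show "H1 $ n = (X * (H1 + H + E)) $ n" for n
      by (cases n) (simp_all add: H_def E_def H1_def X_def assms(3,5))
  qed
  moreover have "A = E + X * (H * A)"
    unfolding A_def H_def E_def X_def by (rule fps_convolution_recurrence[OF a])
  moreover have "(1 - X) * E = 1"
  proof (rule fps_ext)
    show "((1 - X) * E) $ n = 1 $ n" for n by (cases n) (simp_all add: E_def X_def algebra_simps)
  qed
  ultimately have "(1 - 4 * X + 3 * X ^ 2 - X ^ 3) * A = 1 - 3 * X + X ^ 2" by algebra
  then show ?thesis unfolding A_def X_def .
qed

definition binom_sum :: "nat \<Rightarrow> nat \<Rightarrow> nat" where
  "binom_sum j m = (\<Sum>i<m+1. (m + 2*i) choose (3*i + j))"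

lemma binom_sum_extend:
  "m < N + j \<Longrightarrow> (\<Sum>i<N. (m + 2*i) choose (3*i + j)) = (\<Sum>i<N+K. (m + 2*i) choose (3*i + j))"
proof (induction K)
  case (Suc K)
  have "m + 2*(N+K) < 3*(N+K) + j" using Suc.prems by simp
  then have "(m + 2*(N+K)) choose (3*(N+K) + j) = 0" by simp
  then show ?case using Suc by simp
qed simp

lemma binom_sum_1_Suc: "binom_sum 1 (Suc m) = binom_sum 1 m + binom_sum 0 m"
proof -
  have "binom_sum 1 (Suc m) = (\<Sum>i<m+2. ((m + 2*i) choose (3*i)) + ((m + 2*i) choose (3*i + 1)))"
    unfolding binom_sum_def by (intro sum.cong) simp_all
  also have "\<dots> = (\<Sum>i<m+2. (m + 2*i) choose (3*i + 0)) + (\<Sum>i<m+2. (m + 2*i) choose (3*i + 1))"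
    by (simp add: sum.distrib)
  also have "(\<Sum>i<m+2. (m + 2*i) choose (3*i + 0)) = binom_sum 0 m"
    unfolding binom_sum_def using binom_sum_extend[of m "m+1" 0 1] by simp
  also have "(\<Sum>i<m+2. (m + 2*i) choose (3*i + 1)) = binom_sum 1 m"
    unfolding binom_sum_def using binom_sum_extend[of m "m+1" 1 1] by simp
  finally show ?thesis by simp
qed

lemma binom_sum_2_Suc: "binom_sum 2 (Suc m) = binom_sum 2 m + binom_sum 1 m"
proof -
  have "binom_sum 2 (Suc m) = (\<Sum>i<m+2. ((m + 2*i) choose (3*i + 1)) + ((m + 2*i) choose (3*i + 2)))"
    unfolding binom_sum_def by (intro sum.cong) (simp_all add: numeral_2_eq_2)
  also have "\<dots> = (\<Sum>i<m+2. (m + 2*i) choose (3*i + 1)) + (\<Sum>i<m+2. (m + 2*i) choose (3*i + 2))"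
    by (simp add: sum.distrib)
  also have "(\<Sum>i<m+2. (m + 2*i) choose (3*i + 1)) = binom_sum 1 m"
    unfolding binom_sum_def using binom_sum_extend[of m "m+1" 1 1] by simp
  also have "(\<Sum>i<m+2. (m + 2*i) choose (3*i + 2)) = binom_sum 2 m"
    unfolding binom_sum_def using binom_sum_extend[of m "m+1" 2 1] by simp
  finally show ?thesis by simp
qed

lemma binom_sum_0_Suc: "binom_sum 0 (Suc m) = binom_sum 0 m + binom_sum 2 (Suc (Suc m))"
proof -
  have "binom_sum 0 (Suc m) = (\<Sum>i<Suc (Suc m). (Suc m + 2*i) choose (3*i))"
    unfolding binom_sum_def by simp
  also have "\<dots> = 1 + (\<Sum>i<Suc m. (Suc m + 2*Suc i) choose (3*Suc i))"
    by (subst sum.lessThan_Suc_shift) simp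
  also have "(\<Sum>i<Suc m. (Suc m + 2*Suc i) choose (3*Suc i))
     = (\<Sum>i<Suc m. (((m + 2) + 2*i) choose (3*i + 2)) + ((m + 2*Suc i) choose (3*Suc i)))"
    by (intro sum.cong) (simp_all add: numeral_2_eq_2 numeral_3_eq_3)
  also have "\<dots> = (\<Sum>i<Suc m. ((m + 2) + 2*i) choose (3*i + 2))
      + (\<Sum>i<Suc m. (m + 2*Suc i) choose (3*Suc i))"
    by (simp add: sum.distrib)
  also have "(\<Sum>i<Suc m. ((m + 2) + 2*i) choose (3*i + 2)) = binom_sum 2 (Suc (Suc m))"
    unfolding binom_sum_def using binom_sum_extend[of "m+2" "m+1" 2 2] by simp
  also have "1 + (binom_sum 2 (Suc (Suc m)) + (\<Sum>i<Suc m. (m + 2*Suc i) choose (3*Suc i)))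
      = binom_sum 2 (Suc (Suc m)) + binom_sum 0 m"
  proof -
    have "binom_sum 0 m = (\<Sum>i<Suc (Suc m). (m + 2*i) choose (3*i + 0))"
      unfolding binom_sum_def using binom_sum_extend[of m "m+1" 0 1] by simp
    also have "\<dots> = 1 + (\<Sum>i<Suc m. (m + 2*Suc i) choose (3*Suc i))"
      by (subst sum.lessThan_Suc_shift) simp
    finally show ?thesis by simp
  qed
  finally show ?thesis by simp
qed

lemma binom_sum_0_rec:
  "int (binom_sum 0 (m + 3)) =
     4 * int (binom_sum 0 (m + 2)) - 3 * int (binom_sum 0 (m + 1)) + int (binom_sum 0 m)"
proof -
  have "binom_sum 0 (m + 1) = binom_sum 0 m + binom_sum 2 (m + 2)"
    "binom_sum 0 (m + 2) = binom_sum 0 (m + 1) + binom_sum 2 (m + 3)"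
    "binom_sum 0 (m + 3) = binom_sum 0 (m + 2) + binom_sum 2 (m + 4)"
    using binom_sum_0_Suc[of m] binom_sum_0_Suc[of "m + 1"] binom_sum_0_Suc[of "m + 2"]
    by (simp_all add: eval_nat_numeral)
  moreover have "binom_sum 2 (m + 3) = binom_sum 2 (m + 2) + binom_sum 1 (m + 2)"
    "binom_sum 2 (m + 4) = binom_sum 2 (m + 3) + binom_sum 1 (m + 3)"
    using binom_sum_2_Suc[of "m + 2"] binom_sum_2_Suc[of "m + 3"] by (simp_all add: eval_nat_numeral)
  moreover have "binom_sum 1 (m + 3) = binom_sum 1 (m + 2) + binom_sum 0 (m + 2)"
    using binom_sum_1_Suc[of "m + 2"] by (simp add: eval_nat_numeral)
  ultimately show ?thesis by linarith
qed

lemma binom_sum_0_initial: "binom_sum 0 0 = 1" "binom_sum 0 1 = 2" "binom_sum 0 2 = 6"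
  by (simp_all add: binom_sum_def numeral_eq_Suc)

lemma coefficients_of_fps_equation:
  fixes A :: "real fps"
  assumes "(1 - 4 * fps_X + 3 * fps_X ^ 2 - fps_X ^ 3) * A = 1 - 3 * fps_X + fps_X ^ 2"
  shows "A $ 0 = 1" "A $ 1 = 1" "A $ 2 = 2"
    "\<And>n. n \<ge> 3 \<Longrightarrow> A $ n = 4 * A $ (n-1) - 3 * A $ (n-2) + A $ (n-3)"
proof -
  have eq: "A - 4 * (fps_X * A) + 3 * (fps_X ^ 2 * A) - fps_X ^ 3 * A = 1 - 3 * fps_X + fps_X ^ 2"
    using assms by (simp add: algebra_simps)
  have c: "A $ n - 4 * (if n = 0 then 0 else A $ (n-1)) + 3 * (if n < 2 then 0 else A $ (n-2))
      - (if n < 3 then 0 else A $ (n-3)) = (if n = 0 then 1 else 0) - 3 * (if n = 1 then 1 else 0) + (if n = 2 then 1 else 0)" for n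
  proof -
    have "(A - 4 * (fps_X * A) + 3 * (fps_X ^ 2 * A) - fps_X ^ 3 * A) $ n = (1 - 3 * fps_X + fps_X ^ 2 :: real fps) $ n"
      using eq by simp
    then show ?thesis
      by (simp add: numeral_fps_const fps_X_power_mult_nth fps_X_power_nth fps_X_nth)
  qed
  show "A $ 0 = 1" using c[of 0] by simp
  show "A $ 1 = 1" using c[of 0] c[of 1] by simp
  show "A $ 2 = 2" using c[of 0] c[of 1] c[of 2] by simp
  show "\<And>n. n \<ge> 3 \<Longrightarrow> A $ n = 4 * A $ (n-1) - 3 * A $ (n-2) + A $ (n-3)"
  proof -
    fix n :: nat assume "n \<ge> 3"
    then show "A $ n = 4 * A $ (n-1) - 3 * A $ (n-2) + A $ (n-3)" using c[of n] by simp
  qed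
qed

lemma linear_recurrence_eqI:
  fixes f g :: "nat \<Rightarrow> int"
  assumes "f 0 = g 0" "f 1 = g 1" "f 2 = g 2"
    and "\<And>n. f (n + 3) = 4 * f (n + 2) - 3 * f (n + 1) + f n"
    and "\<And>n. g (n + 3) = 4 * g (n + 2) - 3 * g (n + 1) + g n"
  shows "f n = g n"
proof (induction n rule: less_induct)
  case (less n)
  show ?case
  proof (cases "n < 3")
    case True
    then have "n = 0 \<or> n = 1 \<or> n = 2" by auto
    then show ?thesis using assms(1-3) by auto
  next
    case False
    then obtain m where "n = m + 3" by (metis add.commute le_Suc_ex not_less)
    then show ?thesis using less assms(4,5)[of m] by simp
  qed
qed

lemma aP_eq_card_avoiders: "aP n = card (avoiders n)"
  unfolding aP_def avoiders_def pop_avoids_def pop_contains_popP_iff ..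

lemma aP_fps_equation:
  "(1 - 4 * fps_X + 3 * fps_X ^ 2 - fps_X ^ 3) * Abs_fps (\<lambda>n. real (aP n))
     = (1 - 3 * fps_X + fps_X ^ 2 :: real fps)"
proof (rule fps_equation_of_recurrences)
  show "aP n = 1 + (\<Sum>M\<in>{1..n}. card (pairs_ne (M - 1)) * aP (n - M))" for n
    unfolding aP_eq_card_avoiders by (rule card_avoiders)
  show "card (pairs_ne (Suc k)) = card (pairs_ne k) + (card (pairs_ne k) + 1) + card (pairs_hd_max k)"
    "card (pairs_hd_max (Suc k)) = card (pairs_hd_max k) + (card (pairs_ne k) + 1)" for k
    using card_pairs_ne_Suc card_pairs_hd_max_Suc card_pairs by simp_all
qed (simp_all add: pairs_ne_0 pairs_hd_max_0)

lemma aP_initial: "aP 0 = 1" "aP 1 = 1" "aP 2 = 2"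
  using coefficients_of_fps_equation(1-3)[OF aP_fps_equation] by simp_all

lemma aP_recurrence:
  "n \<ge> 3 \<Longrightarrow> int (aP n) = 4 * int (aP (n - 1)) - 3 * int (aP (n - 2)) + int (aP (n - 3))"
  using coefficients_of_fps_equation(4)[OF aP_fps_equation, of n] by (simp add: of_int_eq_iff[symmetric])

lemma aP_binomial_sum:
  assumes "n \<ge> 1" shows "aP n = (\<Sum>i<n. (n + 2 * i - 1) choose (3 * i))"
proof -
  have "int (aP (m + 1)) = int (binom_sum 0 m)" for m
  proof (rule linear_recurrence_eqI[where f = "\<lambda>m. int (aP (m + 1))"])
    show "int (aP (m + 3 + 1)) = 4 * int (aP (m + 2 + 1)) - 3 * int (aP (m + 1 + 1)) + int (aP (m + 1))" for m
      using aP_recurrence[of "m + 4"] by (simp add: eval_nat_numeral)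
    have "aP 3 = 6" using aP_recurrence[of 3] aP_initial by simp
    then show "int (aP (0 + 1)) = int (binom_sum 0 0)" "int (aP (1 + 1)) = int (binom_sum 0 1)"
      "int (aP (2 + 1)) = int (binom_sum 0 2)"
      using aP_initial binom_sum_0_initial by (simp_all add: numeral_2_eq_2 numeral_3_eq_3)
  qed (rule binom_sum_0_rec)
  then have "aP n = binom_sum 0 (n - 1)" using assms by (metis le_add_diff_inverse2 of_nat_eq_iff)
  also have "\<dots> = (\<Sum>i<n. (n + 2 * i - 1) choose (3 * i))"
    unfolding binom_sum_def using assms by (intro sum.cong) auto
  finally show ?thesis .
qed

lemma aP_fps:
  "Abs_fps (\<lambda>n. real (aP n)) = (1 - 3 * fps_X + fps_X ^ 2) / (1 - 4 * fps_X + 3 * fps_X ^ 2 - fps_X ^ 3)"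
proof -
  let ?D = "1 - 4 * fps_X + 3 * fps_X ^ 2 - fps_X ^ 3 :: real fps"
  have "?D $ 0 \<noteq> 0" by (simp add: fps_X_power_nth numeral_fps_const)
  then have "?D \<noteq> 0" by (metis fps_zero_nth)
  then show ?thesis unfolding aP_fps_equation[symmetric] by (rule nonzero_mult_div_cancel_left[symmetric])
qed

lemma pop_avoids_popP_iff_classical:
  "\<pi> \<in> perms n \<Longrightarrow> pop_avoids 4 popP \<pi> \<longleftrightarrow>
     (\<forall>q\<in>{[4,1,3,2], [4,2,1,3], [3,2,1,4], [4,1,2,3], [3,1,2,4]}. pat_avoids q \<pi>)"
  using pop_contains_popP_iff_classical[of \<pi>]
  by (auto simp: perms_def pop_avoids_def pat_avoids_def)

theorem theorem3p12:
  shows "(\<forall>n. \<forall>\<pi>\<in>perms n. pop_avoids 4 popP \<pi> \<longleftrightarrow>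
             (\<forall>q\<in>{[4,1,3,2], [4,2,1,3], [3,2,1,4], [4,1,2,3], [3,1,2,4]}. pat_avoids q \<pi>))
    \<and> aP 0 = 1 \<and> aP 1 = 1 \<and> aP 2 = 2
    \<and> (\<forall>n\<ge>3. int (aP n) = 4 * int (aP (n - 1)) - 3 * int (aP (n - 2)) + int (aP (n - 3)))
    \<and> (\<forall>n\<ge>1. aP n = (\<Sum>i<n. (n + 2 * i - 1) choose (3 * i)))
    \<and> Abs_fps (\<lambda>n. real (aP n)) =
        (1 - 3 * fps_X + fps_X ^ 2) / (1 - 4 * fps_X + 3 * fps_X ^ 2 - fps_X ^ 3)"
  using pop_avoids_popP_iff_classical aP_initial aP_recurrence aP_binomial_sum aP_fps by blast

end
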